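(* Let $\mathcal{U}$ be an idempotent ultrafilter in $(\beta\mathbb{N},+)$. If $\mu,\nu\in\mathbb{A}_{\mathcal{U}}$, then $\mu\,\hat{}\,\nu\in\mathbb{A}_{\mathcal{U}}$.
   Context: For $a,b\subseteq(0,1]$ put $a\,\hat{}\,b=\tfrac12 a\cup\tfrac12(b+1)$; $\mathbb{T}$ is the set generated from $\mathbf{1}=\{1\}$ by $\hat{}$ (the free binary system on one generator), $\#(t)$ is the cardinality of $t$, $\mathbb{T}_n=\{t:\#(t)=n\}$, and $\mathbb{A}_n$ is the set of probability measures on $\mathbb{T}_n$. For a set $S$, $\Pr(S)$ denotes the set of finitely additive probability measures on $S$, identified with the positive linear functionals $f$ on $\ell^\infty(S)$ with $f(\bar 1)=1$, equipped with the weak* topology; $\mathbb{A}_n\subseteq\Pr(\mathbb{T})$. For $\mu,\nu\in\Pr(\mathbb{T})$, $(\mu\,\hat{}\,\nu)(f)=\int\int f(x\,\hat{}\,y)\,d\nu(y)\,d\mu(x)$ for $f\in\ell^\infty(\mathbb{T})$. $\beta\mathbb{N}$ carries the usual extension of addition ($W\in\mathcal{U}+\mathcal{V}$ iff $\{m:\{n:m+n\in W\}\in\mathcal{V}\}\in\mathcal{U}$), and $\mathcal{U}$ is idempotent if $\mathcal{U}+\mathcal{U}=\mathcal{U}$. $\mathbb{A}_{\mathcal{U}}$ is the set of $\mu\in\Pr(\mathbb{T})$ such that for every weak*-open $W\ni\mu$, $\{m\in\mathbb{N}:W\cap\mathbb{A}_m\neq\emptyset\}\in\mathcal{U}$. 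*)

theory Defs
  imports Complex_Main
begin

definition hat :: "real set \<Rightarrow> real set \<Rightarrow> real set" (infixr "\<^sup>\<and>" 80) where
  "hat a b = (\<lambda>x. x / 2) ` a \<union> (\<lambda>x. (x + 1) / 2) ` b"

inductive_set TT :: "real set set" where
  one: "{1} \<in> TT"
| hat: "a \<in> TT \<Longrightarrow> b \<in> TT \<Longrightarrow> hat a b \<in> TT"

definition TTn :: "nat \<Rightarrow> real set set" where
  "TTn n = {t \<in> TT. card t = n}"

text \<open>Bounded real functions on \<T>, represented extensionally (value 0 off \<T>).\<close>
definition linf :: "(real set \<Rightarrow> real) set" where
  "linf = {g. (\<exists>B. \<forall>x\<in>TT. \<bar>g x\<bar> \<le> B) \<and> (\<forall>x. x \<notin> TT \<longrightarrow> g x = 0)}"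

text \<open>Pr(\<T>): positive linear functionals on linf with value 1 at the constant one
  (extended by 0 outside linf, so that the representation is unique).\<close>
definition PrT :: "((real set \<Rightarrow> real) \<Rightarrow> real) set" where
  "PrT = {\<mu>. (\<forall>f\<in>linf. \<forall>g\<in>linf. \<forall>c::real. \<mu> (\<lambda>x. c * f x + g x) = c * \<mu> f + \<mu> g)
            \<and> (\<forall>f\<in>linf. (\<forall>x\<in>TT. 0 \<le> f x) \<longrightarrow> 0 \<le> \<mu> f)
            \<and> \<mu> (\<lambda>x. if x \<in> TT then 1 else 0) = 1
            \<and> (\<forall>f. f \<notin> linf \<longrightarrow> \<mu> f = 0)}"

text \<open>Weak* open subsets of Pr(\<T>) (subspace topology of the weak* topology).\<close>
definition weakstar_open :: "((real set \<Rightarrow> real) \<Rightarrow> real) set \<Rightarrow> bool" where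
  "weakstar_open W \<longleftrightarrow> W \<subseteq> PrT \<and>
     (\<forall>\<mu>\<in>W. \<exists>F e. finite F \<and> F \<subseteq> linf \<and> e > 0 \<and>
        {\<nu>\<in>PrT. \<forall>g\<in>F. \<bar>\<nu> g - \<mu> g\<bar> < e} \<subseteq> W)"

text \<open>\<A>_n: probability measures on \<T>_n, viewed as elements of Pr(\<T>).\<close>
definition AA :: "nat \<Rightarrow> ((real set \<Rightarrow> real) \<Rightarrow> real) set" where
  "AA n = {\<mu>\<in>PrT. \<exists>p::real set \<Rightarrow> real. (\<forall>t\<in>TTn n. 0 \<le> p t) \<and> (\<Sum>t\<in>TTn n. p t) = 1 \<and>
             (\<forall>f\<in>linf. \<mu> f = (\<Sum>t\<in>TTn n. p t * f t))}"

text \<open>The product \<mu>^\<nu>: (\<mu>^\<nu>)(f) = \<integral>\<integral> f(x^y) d\<nu>(y) d\<mu>(x).\<close>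
definition mhat :: "((real set \<Rightarrow> real) \<Rightarrow> real) \<Rightarrow> ((real set \<Rightarrow> real) \<Rightarrow> real)
                     \<Rightarrow> ((real set \<Rightarrow> real) \<Rightarrow> real)" where
  "mhat \<mu> \<nu> = (\<lambda>f. if f \<in> linf then
       \<mu> (\<lambda>x. if x \<in> TT then \<nu> (\<lambda>y. if y \<in> TT then f (hat x y) else 0) else 0)
     else 0)"

definition Npos :: "nat set" where "Npos = {n. 1 \<le> n}"

definition is_ultrafilter :: "nat set set \<Rightarrow> bool" where
  "is_ultrafilter U \<longleftrightarrow> (\<forall>A\<in>U. A \<subseteq> Npos) \<and> Npos \<in> U \<and> {} \<notin> U
     \<and> (\<forall>A\<in>U. \<forall>B\<in>U. A \<inter> B \<in> U)
     \<and> (\<forall>A\<in>U. \<forall>B. A \<subseteq> B \<and> B \<subseteq> Npos \<longrightarrow> B \<in> U)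
     \<and> (\<forall>A. A \<subseteq> Npos \<longrightarrow> A \<in> U \<or> Npos - A \<in> U)"

definition uf_plus :: "nat set set \<Rightarrow> nat set set \<Rightarrow> nat set set" where
  "uf_plus U V = {W. W \<subseteq> Npos \<and> {m\<in>Npos. {n\<in>Npos. m + n \<in> W} \<in> V} \<in> U}"

definition idempotent_uf :: "nat set set \<Rightarrow> bool" where
  "idempotent_uf U \<longleftrightarrow> is_ultrafilter U \<and> uf_plus U U = U"

definition AU :: "nat set set \<Rightarrow> ((real set \<Rightarrow> real) \<Rightarrow> real) set" where
  "AU U = {\<mu>\<in>PrT. \<forall>W. weakstar_open W \<and> \<mu> \<in> W \<longrightarrow> {m\<in>Npos. W \<inter> AA m \<noteq> {}} \<in> U}"

end

theory Submission
  imports Defs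
begin

text \<open>Approximate \<mu> by some \<alpha> \<in> \<A>_m, where the approximation is tested on the
  finitely many functions x \<mapsto> \<nu>(f(x^\<cdot>)), f among the test functions of a neighbourhood of \<mu>^\<nu>.
  Since \<alpha> has finite support, it then suffices to approximate \<nu> by some \<beta> \<in> \<A>_n on the
  finitely many sections y \<mapsto> f(t^y), t \<in> \<T>_m; then \<alpha>^\<beta> \<in> \<A>_(m+n) lies in the neighbourhood.
  So the set S of good indices satisfies {m. {n. m + n \<in> S} \<in> \<U>} \<in> \<U>, i.e. S \<in> \<U> + \<U> = \<U>.\<close>

lemma TT_subset: "t \<in> TT \<Longrightarrow> t \<subseteq> {0<..1} \<and> finite t \<and> t \<noteq> {}"
  by (induction rule: TT.induct) (auto simp: hat_def)

lemma card_hat: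
  assumes "a \<in> TT" "b \<in> TT"
  shows "card (hat a b) = card a + card b"
proof -
  have a: "a \<subseteq> {0<..1}" "finite a" and b: "b \<subseteq> {0<..1}" "finite b"
    using TT_subset assms by auto
  have "(\<lambda>x::real. x / 2) ` a \<inter> (\<lambda>x. (x + 1) / 2) ` b = {}"
    using a b by fastforce
  moreover have "inj_on (\<lambda>x::real. x / 2) a" "inj_on (\<lambda>x::real. (x + 1) / 2) b"
    by (auto simp: inj_on_def)
  ultimately show ?thesis
    unfolding hat_def using a b by (simp add: card_Un_disjoint card_image)
qed

lemma card_TT_pos: "t \<in> TT \<Longrightarrow> 1 \<le> card t"
  using TT_subset by (metis One_nat_def Suc_leI card_gt_0_iff)

lemma TTn_TT: "t \<in> TTn m \<Longrightarrow> t \<in> TT"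
  by (simp add: TTn_def)

lemma hat_in_TTn: "t \<in> TTn m \<Longrightarrow> s \<in> TTn n \<Longrightarrow> hat t s \<in> TTn (m + n)"
  unfolding TTn_def using card_hat TT.hat by auto

lemma finite_TTn: "finite (TTn n)"
proof (induction n rule: less_induct)
  case (less n)
  let ?H = "\<lambda>k. (\<lambda>(a, b). hat a b) ` (TTn k \<times> TTn (n - k))"
  have cover: "TTn n \<subseteq> {{1}} \<union> (\<Union>k\<in>{1..<n}. ?H k)"
  proof
    fix t assume "t \<in> TTn n"
    hence t: "t \<in> TT" "card t = n" by (auto simp: TTn_def)
    from t(1) show "t \<in> {{1}} \<union> (\<Union>k\<in>{1..<n}. ?H k)"
    proof (cases rule: TT.cases)
      case (hat a b)
      have "card a \<ge> 1" "card b \<ge> 1" "card a + card b = n"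
        using hat t(2) card_TT_pos card_hat by auto
      moreover have "a \<in> TTn (card a)" "b \<in> TTn (n - card a)"
        using hat \<open>card a + card b = n\<close> by (auto simp: TTn_def)
      ultimately show ?thesis using hat by force
    qed simp
  qed
  have "finite (?H k)" if "k \<in> {1..<n}" for k
    using that less by auto
  hence "finite ({{1}} \<union> (\<Union>k\<in>{1..<n}. ?H k))" by simp
  with cover show ?case by (rule finite_subset)
qed

definition one_TT :: "real set \<Rightarrow> real" where
  "one_TT = (\<lambda>x. if x \<in> TT then 1 else 0)"

lemma one_TT_linf: "one_TT \<in> linf"
  unfolding linf_def one_TT_def by auto

lemma zero_linf: "(\<lambda>x. 0) \<in> linf"
  unfolding linf_def by auto

lemma linf_lincomb:
  assumes f: "f \<in> linf" and g: "g \<in> linf"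
  shows "(\<lambda>x. c * f x + g x) \<in> linf"
proof -
  obtain B1 B2 where bounds: "\<forall>x\<in>TT. \<bar>f x\<bar> \<le> B1" "\<forall>x\<in>TT. \<bar>g x\<bar> \<le> B2"
    using f g by (auto simp: linf_def)
  have "\<bar>c * f x + g x\<bar> \<le> \<bar>c\<bar> * B1 + B2" if "x \<in> TT" for x
  proof -
    have "\<bar>c\<bar> * \<bar>f x\<bar> \<le> \<bar>c\<bar> * B1" "\<bar>g x\<bar> \<le> B2"
      using bounds that by (auto intro: mult_left_mono)
    thus ?thesis using abs_triangle_ineq[of "c * f x" "g x"] by (simp add: abs_mult)
  qed
  thus ?thesis using f g by (auto simp: linf_def)
qed

lemma PrT_linear:
  "\<mu> \<in> PrT \<Longrightarrow> f \<in> linf \<Longrightarrow> g \<in> linf \<Longrightarrow> \<mu> (\<lambda>x. c * f x + g x) = c * \<mu> f + \<mu> g"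
  unfolding PrT_def by blast

lemma PrT_nonneg: "\<mu> \<in> PrT \<Longrightarrow> f \<in> linf \<Longrightarrow> \<forall>x\<in>TT. 0 \<le> f x \<Longrightarrow> 0 \<le> \<mu> f"
  unfolding PrT_def by blast

lemma PrT_one_TT: "\<mu> \<in> PrT \<Longrightarrow> \<mu> one_TT = 1"
  unfolding PrT_def one_TT_def by blast

lemma PrT_abs_le:
  assumes \<mu>: "\<mu> \<in> PrT" and f: "f \<in> linf" and B: "\<forall>x\<in>TT. \<bar>f x\<bar> \<le> B"
  shows "\<bar>\<mu> f\<bar> \<le> B"
proof -
  have B_linf: "(\<lambda>x. B * one_TT x + 0) \<in> linf"
    by (rule linf_lincomb[OF one_TT_linf zero_linf])
  have "\<mu> (\<lambda>x. 0) = 0"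
    using PrT_linear[OF \<mu> zero_linf zero_linf, of 1] by simp
  hence \<mu>B: "\<mu> (\<lambda>x. B * one_TT x + 0) = B"
    using PrT_linear[OF \<mu> one_TT_linf zero_linf, of B] PrT_one_TT[OF \<mu>] by simp
  have "0 \<le> c * \<mu> f + B" if "\<bar>c\<bar> = 1" for c
  proof -
    have "\<forall>x\<in>TT. 0 \<le> c * f x + (B * one_TT x + 0)"
      using B that by (auto simp: one_TT_def abs_if split: if_splits)
    thus ?thesis
      using PrT_nonneg[OF \<mu> linf_lincomb[OF f B_linf]] PrT_linear[OF \<mu> f B_linf] \<mu>B by simp
  qed
  from this[of 1] this[of "-1"] show ?thesis by linarith
qed

definition hat_section :: "(real set \<Rightarrow> real) \<Rightarrow> real set \<Rightarrow> real set \<Rightarrow> real" where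
  "hat_section f x = (\<lambda>y. if y \<in> TT then f (hat x y) else 0)"

definition hat_inner ::
    "((real set \<Rightarrow> real) \<Rightarrow> real) \<Rightarrow> (real set \<Rightarrow> real) \<Rightarrow> real set \<Rightarrow> real" where
  "hat_inner \<nu> f = (\<lambda>x. if x \<in> TT then \<nu> (hat_section f x) else 0)"

lemma mhat_eq: "mhat \<mu> \<nu> f = (if f \<in> linf then \<mu> (hat_inner \<nu> f) else 0)"
  unfolding mhat_def hat_inner_def hat_section_def by simp

lemma hat_section_abs_le:
  "\<forall>z\<in>TT. \<bar>f z\<bar> \<le> B \<Longrightarrow> x \<in> TT \<Longrightarrow> \<forall>y\<in>TT. \<bar>hat_section f x y\<bar> \<le> B"
  by (auto simp: hat_section_def TT.hat)

lemma hat_section_linf: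
  assumes "f \<in> linf" "x \<in> TT"
  shows "hat_section f x \<in> linf"
proof -
  obtain B where "\<forall>z\<in>TT. \<bar>f z\<bar> \<le> B"
    using assms(1) by (auto simp: linf_def)
  hence "\<forall>y\<in>TT. \<bar>hat_section f x y\<bar> \<le> B"
    using hat_section_abs_le[OF _ assms(2)] by blast
  thus ?thesis unfolding linf_def by (auto simp: hat_section_def)
qed

lemma hat_inner_linf:
  assumes f: "f \<in> linf" and \<nu>: "\<nu> \<in> PrT"
  shows "hat_inner \<nu> f \<in> linf"
proof -
  obtain B where "\<forall>z\<in>TT. \<bar>f z\<bar> \<le> B"
    using f by (auto simp: linf_def)
  hence "\<forall>x\<in>TT. \<bar>hat_inner \<nu> f x\<bar> \<le> B"
    using PrT_abs_le[OF \<nu> hat_section_linf[OF f]] hat_section_abs_le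
    by (simp add: hat_inner_def)
  thus ?thesis by (auto simp: linf_def hat_inner_def)
qed

lemma hat_inner_lincomb:
  assumes "\<nu> \<in> PrT" "f \<in> linf" "g \<in> linf"
  shows "hat_inner \<nu> (\<lambda>x. c * f x + g x) = (\<lambda>x. c * hat_inner \<nu> f x + hat_inner \<nu> g x)"
proof
  fix x
  have "hat_section (\<lambda>x. c * f x + g x) x = (\<lambda>y. c * hat_section f x y + hat_section g x y)"
    by (auto simp: hat_section_def)
  thus "hat_inner \<nu> (\<lambda>x. c * f x + g x) x = c * hat_inner \<nu> f x + hat_inner \<nu> g x"
    using assms PrT_linear[OF assms(1) hat_section_linf hat_section_linf]
    by (simp add: hat_inner_def)
qed

lemma hat_inner_one_TT: "\<nu> \<in> PrT \<Longrightarrow> hat_inner \<nu> one_TT = one_TT"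
proof -
  assume \<nu>: "\<nu> \<in> PrT"
  have "hat_section one_TT x = one_TT" if "x \<in> TT" for x
    using that TT.hat by (auto simp: hat_section_def one_TT_def)
  thus ?thesis using PrT_one_TT[OF \<nu>] by (auto simp: hat_inner_def one_TT_def)
qed

lemma mhat_PrT:
  assumes \<mu>: "\<mu> \<in> PrT" and \<nu>: "\<nu> \<in> PrT"
  shows "mhat \<mu> \<nu> \<in> PrT"
proof -
  have "mhat \<mu> \<nu> (\<lambda>x. c * f x + g x) = c * mhat \<mu> \<nu> f + mhat \<mu> \<nu> g"
    if "f \<in> linf" "g \<in> linf" for f g c
    using that linf_lincomb hat_inner_lincomb[OF \<nu>]
      PrT_linear[OF \<mu> hat_inner_linf[OF _ \<nu>] hat_inner_linf[OF _ \<nu>]]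
    by (simp add: mhat_eq)
  moreover have "0 \<le> mhat \<mu> \<nu> f" if f: "f \<in> linf" and "\<forall>x\<in>TT. 0 \<le> f x" for f
  proof -
    have "\<forall>x\<in>TT. 0 \<le> hat_inner \<nu> f x"
      using that PrT_nonneg[OF \<nu> hat_section_linf[OF f]] TT.hat
      by (simp add: hat_inner_def hat_section_def)
    thus ?thesis using PrT_nonneg[OF \<mu> hat_inner_linf[OF f \<nu>]] f by (simp add: mhat_eq)
  qed
  moreover have "mhat \<mu> \<nu> one_TT = 1"
    using one_TT_linf PrT_one_TT[OF \<mu>] hat_inner_one_TT[OF \<nu>] by (simp add: mhat_eq)
  ultimately show ?thesis unfolding PrT_def by (auto simp: one_TT_def mhat_eq)
qed

lemma AA_PrT: "\<alpha> \<in> AA m \<Longrightarrow> \<alpha> \<in> PrT"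
  by (simp add: AA_def)

lemma AA_weights:
  assumes "\<alpha> \<in> AA m"
  obtains p where "\<forall>t\<in>TTn m. 0 \<le> p t" "(\<Sum>t\<in>TTn m. p t) = 1"
    "\<forall>f\<in>linf. \<alpha> f = (\<Sum>t\<in>TTn m. p t * f t)"
  using assms unfolding AA_def by blast

lemma mhat_finite_weights:
  assumes \<alpha>: "\<forall>f\<in>linf. \<alpha> f = (\<Sum>t\<in>TTn m. p t * f t)" and \<beta>: "\<beta> \<in> PrT" and f: "f \<in> linf"
  shows "mhat \<alpha> \<beta> f = (\<Sum>t\<in>TTn m. p t * \<beta> (hat_section f t))"
proof -
  have "mhat \<alpha> \<beta> f = (\<Sum>t\<in>TTn m. p t * hat_inner \<beta> f t)"
    using f \<alpha> hat_inner_linf[OF f \<beta>] by (simp add: mhat_eq)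
  also have "\<dots> = (\<Sum>t\<in>TTn m. p t * \<beta> (hat_section f t))"
    by (rule sum.cong) (simp_all add: hat_inner_def TTn_TT)
  finally show ?thesis .
qed

lemma mhat_finite_weights_both:
  assumes \<alpha>: "\<forall>f\<in>linf. \<alpha> f = (\<Sum>t\<in>TTn m. p t * f t)"
    and \<beta>: "\<beta> \<in> PrT" "\<forall>f\<in>linf. \<beta> f = (\<Sum>s\<in>TTn n. q s * f s)" and f: "f \<in> linf"
  shows "mhat \<alpha> \<beta> f = (\<Sum>t\<in>TTn m. \<Sum>s\<in>TTn n. p t * q s * f (hat t s))"
proof -
  have "\<beta> (hat_section f t) = (\<Sum>s\<in>TTn n. q s * f (hat t s))" if "t \<in> TTn m" for t
    using \<beta>(2) hat_section_linf[OF f TTn_TT[OF that]] TTn_TT[of _ n]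
    by (auto simp: hat_section_def intro: sum.cong)
  thus ?thesis
    unfolding mhat_finite_weights[OF \<alpha> \<beta>(1) f]
    by (auto simp: sum_distrib_left mult.assoc intro!: sum.cong)
qed

lemma mhat_AA:
  assumes "\<alpha> \<in> AA m" "\<beta> \<in> AA n"
  shows "mhat \<alpha> \<beta> \<in> AA (m + n)"
proof -
  obtain p where p: "\<forall>t\<in>TTn m. 0 \<le> p t" "(\<Sum>t\<in>TTn m. p t) = 1"
    "\<forall>f\<in>linf. \<alpha> f = (\<Sum>t\<in>TTn m. p t * f t)" using AA_weights[OF assms(1)] by blast
  obtain q where q: "\<forall>s\<in>TTn n. 0 \<le> q s" "(\<Sum>s\<in>TTn n. q s) = 1"
    "\<forall>f\<in>linf. \<beta> f = (\<Sum>s\<in>TTn n. q s * f s)" using AA_weights[OF assms(2)] by blast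
  have PrT: "\<alpha> \<in> PrT" "\<beta> \<in> PrT" using assms by (simp_all add: AA_PrT)
  define r where "r u = (\<Sum>t\<in>TTn m. \<Sum>s\<in>TTn n. if hat t s = u then p t * q s else 0)" for u
  have r_sum: "(\<Sum>u\<in>TTn (m + n). r u * g u) = (\<Sum>t\<in>TTn m. \<Sum>s\<in>TTn n. p t * q s * g (hat t s))"
    for g
  proof -
    have "(\<Sum>u\<in>TTn (m + n). r u * g u)
        = (\<Sum>t\<in>TTn m. \<Sum>s\<in>TTn n. \<Sum>u\<in>TTn (m + n). if hat t s = u then p t * q s * g u else 0)"
      unfolding r_def sum_distrib_right
      by (subst sum.swap, rule sum.cong[OF refl], subst sum.swap) (auto intro!: sum.cong)
    also have "\<dots> = (\<Sum>t\<in>TTn m. \<Sum>s\<in>TTn n. p t * q s * g (hat t s))"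
      using hat_in_TTn finite_TTn by (auto intro!: sum.cong)
    finally show ?thesis .
  qed
  have "\<forall>u\<in>TTn (m + n). 0 \<le> r u"
    using p q unfolding r_def by (auto intro!: sum_nonneg)
  moreover have "(\<Sum>u\<in>TTn (m + n). r u) = 1"
    using r_sum[of "\<lambda>_. 1"] p(2) q(2)
    by (simp add: sum_distrib_left[symmetric] sum_distrib_right[symmetric])
  moreover have "\<forall>f\<in>linf. mhat \<alpha> \<beta> f = (\<Sum>u\<in>TTn (m + n). r u * f u)"
    using mhat_finite_weights_both[OF p(3) PrT(2) q(3)] r_sum by simp
  ultimately show ?thesis using mhat_PrT[OF PrT] unfolding AA_def by blast
qed

definition weak_nbhd ::
    "((real set \<Rightarrow> real) \<Rightarrow> real) \<Rightarrow> (real set \<Rightarrow> real) set \<Rightarrow> real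
      \<Rightarrow> ((real set \<Rightarrow> real) \<Rightarrow> real) set" where
  "weak_nbhd \<mu> F e = {\<alpha>\<in>PrT. \<forall>g\<in>F. \<bar>\<alpha> g - \<mu> g\<bar> < e}"

lemma weakstar_open_weak_nbhd:
  assumes F: "finite F" "F \<subseteq> linf" and "e > 0"
  shows "weakstar_open (weak_nbhd \<mu> F e)"
  unfolding weakstar_open_def
proof (intro conjI ballI)
  fix \<alpha> assume \<alpha>: "\<alpha> \<in> weak_nbhd \<mu> F e"
  define d where "d = Min (insert e ((\<lambda>g. e - \<bar>\<alpha> g - \<mu> g\<bar>) ` F))"
  have "d > 0"
    unfolding d_def using assms \<alpha> by (auto simp: weak_nbhd_def)
  moreover have "{\<beta>\<in>PrT. \<forall>g\<in>F. \<bar>\<beta> g - \<alpha> g\<bar> < d} \<subseteq> weak_nbhd \<mu> F e"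
  proof (clarsimp simp: weak_nbhd_def)
    fix \<beta> g assume "\<forall>g\<in>F. \<bar>\<beta> g - \<alpha> g\<bar> < d" "g \<in> F"
    moreover have "d \<le> e - \<bar>\<alpha> g - \<mu> g\<bar>"
      unfolding d_def using F \<open>g \<in> F\<close> by (auto intro: Min_le)
    ultimately show "\<bar>\<beta> g - \<mu> g\<bar> < e" by fastforce
  qed
  ultimately show "\<exists>F' e'. finite F' \<and> F' \<subseteq> linf \<and> e' > 0 \<and>
      {\<nu>\<in>PrT. \<forall>g\<in>F'. \<bar>\<nu> g - \<alpha> g\<bar> < e'} \<subseteq> weak_nbhd \<mu> F e"
    using F by blast
qed (auto simp: weak_nbhd_def)

lemma weakstar_open_weak_nbhdE:
  assumes "weakstar_open W" "\<mu> \<in> W"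
  obtains F e where "finite F" "F \<subseteq> linf" "e > 0" "weak_nbhd \<mu> F e \<subseteq> W"
proof -
  have "\<forall>\<mu>\<in>W. \<exists>F e. finite F \<and> F \<subseteq> linf \<and> e > 0 \<and> weak_nbhd \<mu> F e \<subseteq> W"
    using assms(1) unfolding weakstar_open_def weak_nbhd_def by (rule conjunct2)
  from bspec[OF this assms(2)] show ?thesis using that by blast
qed

lemma AU_PrT: "\<mu> \<in> AU U \<Longrightarrow> \<mu> \<in> PrT"
  by (simp add: AU_def)

lemma AU_weak_nbhd:
  assumes \<mu>: "\<mu> \<in> AU U" and F: "finite F" "F \<subseteq> linf" "e > 0"
  shows "{m\<in>Npos. weak_nbhd \<mu> F e \<inter> AA m \<noteq> {}} \<in> U"
proof -
  have "\<mu> \<in> weak_nbhd \<mu> F e"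
    using AU_PrT[OF \<mu>] F(3) by (simp add: weak_nbhd_def)
  thus ?thesis
    using \<mu> weakstar_open_weak_nbhd[OF F] unfolding AU_def by blast
qed

lemma ultrafilter_subset_Npos: "is_ultrafilter U \<Longrightarrow> A \<in> U \<Longrightarrow> A \<subseteq> Npos"
  unfolding is_ultrafilter_def by (drule conjunct1) blast

lemma ultrafilter_mono:
  "is_ultrafilter U \<Longrightarrow> A \<in> U \<Longrightarrow> A \<subseteq> B \<Longrightarrow> B \<subseteq> Npos \<Longrightarrow> B \<in> U"
  unfolding is_ultrafilter_def by blast

lemma idempotent_uf_shifts_mem:
  assumes "idempotent_uf U" "M \<in> U"
    and "\<And>m. m \<in> M \<Longrightarrow> {n\<in>Npos. m + n \<in> S} \<in> U" and "S \<subseteq> Npos"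
  shows "S \<in> U"
proof -
  have uf: "is_ultrafilter U" and idem: "uf_plus U U = U"
    using assms(1) by (simp_all add: idempotent_uf_def)
  have "M \<subseteq> {m\<in>Npos. {n\<in>Npos. m + n \<in> S} \<in> U}"
    using ultrafilter_subset_Npos[OF uf assms(2)] assms(3) by blast
  hence "{m\<in>Npos. {n\<in>Npos. m + n \<in> S} \<in> U} \<in> U"
    by (rule ultrafilter_mono[OF uf assms(2)]) blast
  hence "S \<in> uf_plus U U" using assms(4) by (simp add: uf_plus_def)
  thus ?thesis by (simp only: idem)
qed

lemma abs_convex_comb_less:
  assumes "finite T" "\<forall>t\<in>T. 0 \<le> p t" "(\<Sum>t\<in>T. p t) = 1" "\<forall>t\<in>T. \<bar>d t\<bar> < (e::real)"
  shows "\<bar>\<Sum>t\<in>T. p t * d t\<bar> < e"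
proof -
  obtain t0 where t0: "t0 \<in> T" "p t0 > 0"
    using assms(2,3) by (metis less_eq_real_def sum.neutral zero_neq_one)
  have "0 < (\<Sum>t\<in>T. p t * (e - \<bar>d t\<bar>))"
    by (rule sum_pos2[OF assms(1) t0(1)]) (use t0 assms in auto)
  hence "(\<Sum>t\<in>T. p t * \<bar>d t\<bar>) < e"
    using assms(3) by (simp add: right_diff_distrib sum_subtractf sum_distrib_right[symmetric])
  moreover have "\<bar>\<Sum>t\<in>T. p t * d t\<bar> \<le> (\<Sum>t\<in>T. p t * \<bar>d t\<bar>)"
    using sum_abs[of "\<lambda>t. p t * d t" T] assms(2) by (simp add: abs_mult)
  ultimately show ?thesis by linarith
qed

lemma mhat_AA_close:
  assumes \<alpha>: "\<alpha> \<in> AA m" and \<beta>: "\<beta> \<in> PrT" and \<nu>: "\<nu> \<in> PrT" and g: "g \<in> linf"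
    and close: "\<forall>t\<in>TTn m. \<bar>\<beta> (hat_section g t) - \<nu> (hat_section g t)\<bar> < e"
  shows "\<bar>mhat \<alpha> \<beta> g - \<alpha> (hat_inner \<nu> g)\<bar> < e"
proof -
  obtain p where p: "\<forall>t\<in>TTn m. 0 \<le> p t" "(\<Sum>t\<in>TTn m. p t) = 1"
    "\<forall>f\<in>linf. \<alpha> f = (\<Sum>t\<in>TTn m. p t * f t)" using AA_weights[OF \<alpha>] by blast
  have "\<alpha> (hat_inner \<nu> g) = mhat \<alpha> \<nu> g"
    using g by (simp add: mhat_eq)
  hence "mhat \<alpha> \<beta> g - \<alpha> (hat_inner \<nu> g)
      = (\<Sum>t\<in>TTn m. p t * (\<beta> (hat_section g t) - \<nu> (hat_section g t)))"
    using mhat_finite_weights[OF p(3) _ g] \<beta> \<nu>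
    by (simp add: right_diff_distrib sum_subtractf)
  thus ?thesis using abs_convex_comb_less[OF finite_TTn p(1,2) close] by simp
qed

lemma AU_mhat_shift:
  assumes "is_ultrafilter U" "\<nu> \<in> AU U" "\<mu> \<in> PrT"
    and F: "finite F" "F \<subseteq> linf" "e > 0"
    and \<alpha>: "\<alpha> \<in> AA m" "\<forall>g\<in>F. \<bar>\<alpha> (hat_inner \<nu> g) - \<mu> (hat_inner \<nu> g)\<bar> < e / 2"
    and "m \<in> Npos"
  shows "{n\<in>Npos. m + n \<in> {k\<in>Npos. weak_nbhd (mhat \<mu> \<nu>) F e \<inter> AA k \<noteq> {}}} \<in> U"
proof -
  have \<nu>: "\<nu> \<in> PrT" using assms(2) by (rule AU_PrT)
  define H where "H = (\<lambda>(g, t). hat_section g t) ` (F \<times> TTn m)"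
  have "finite H" "H \<subseteq> linf"
    unfolding H_def using F finite_TTn hat_section_linf TTn_TT by auto
  hence NU: "{n\<in>Npos. weak_nbhd \<nu> H (e / 2) \<inter> AA n \<noteq> {}} \<in> U"
    using AU_weak_nbhd[OF assms(2)] F(3) by simp
  have "m + n \<in> {k\<in>Npos. weak_nbhd (mhat \<mu> \<nu>) F e \<inter> AA k \<noteq> {}}"
    if \<beta>: "\<beta> \<in> weak_nbhd \<nu> H (e / 2)" "\<beta> \<in> AA n" for \<beta> n
  proof -
    have "\<bar>mhat \<alpha> \<beta> g - mhat \<mu> \<nu> g\<bar> < e" if g: "g \<in> F" for g
    proof -
      have "\<bar>mhat \<alpha> \<beta> g - \<alpha> (hat_inner \<nu> g)\<bar> < e / 2"
        using \<beta> g F(2) by (intro mhat_AA_close[OF \<alpha>(1) _ \<nu>]) (auto simp: weak_nbhd_def H_def)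
      moreover have "\<bar>\<alpha> (hat_inner \<nu> g) - \<mu> (hat_inner \<nu> g)\<bar> < e / 2"
        using \<alpha>(2) g by blast
      moreover have "mhat \<mu> \<nu> g = \<mu> (hat_inner \<nu> g)"
        using g F(2) by (auto simp: mhat_eq)
      ultimately show ?thesis by linarith
    qed
    hence "mhat \<alpha> \<beta> \<in> weak_nbhd (mhat \<mu> \<nu>) F e"
      using mhat_PrT[OF AA_PrT[OF \<alpha>(1)] AA_PrT[OF \<beta>(2)]] by (simp add: weak_nbhd_def)
    thus ?thesis using mhat_AA[OF \<alpha>(1) \<beta>(2)] \<open>m \<in> Npos\<close> by (auto simp: Npos_def)
  qed
  thus ?thesis by (intro ultrafilter_mono[OF assms(1) NU]) blast+
qed

theorem lemma3p1:
  assumes "idempotent_uf U"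
    and "\<mu> \<in> AU U" and "\<nu> \<in> AU U"
  shows "mhat \<mu> \<nu> \<in> AU U"
proof -
  have uf: "is_ultrafilter U" using assms(1) by (simp add: idempotent_uf_def)
  have \<mu>: "\<mu> \<in> PrT" and \<nu>: "\<nu> \<in> PrT"
    using assms(2,3) by (simp_all add: AU_PrT)
  have "{k\<in>Npos. W \<inter> AA k \<noteq> {}} \<in> U" if W: "weakstar_open W" "mhat \<mu> \<nu> \<in> W" for W
  proof -
    obtain F e where F: "finite F" "F \<subseteq> linf" "e > 0" and FW: "weak_nbhd (mhat \<mu> \<nu>) F e \<subseteq> W"
      by (rule weakstar_open_weak_nbhdE[OF W])
    let ?S = "{k\<in>Npos. weak_nbhd (mhat \<mu> \<nu>) F e \<inter> AA k \<noteq> {}}"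
    have "finite (hat_inner \<nu> ` F)" "hat_inner \<nu> ` F \<subseteq> linf"
      using F hat_inner_linf[OF _ \<nu>] by auto
    hence "{m\<in>Npos. weak_nbhd \<mu> (hat_inner \<nu> ` F) (e / 2) \<inter> AA m \<noteq> {}} \<in> U"
      using AU_weak_nbhd[OF assms(2)] F(3) by simp
    hence "?S \<in> U"
    proof (rule idempotent_uf_shifts_mem[OF assms(1)])
      fix m assume "m \<in> {m\<in>Npos. weak_nbhd \<mu> (hat_inner \<nu> ` F) (e / 2) \<inter> AA m \<noteq> {}}"
      then obtain \<alpha> where "\<alpha> \<in> AA m" "\<forall>g\<in>F. \<bar>\<alpha> (hat_inner \<nu> g) - \<mu> (hat_inner \<nu> g)\<bar> < e / 2"
        and "m \<in> Npos"
        by (auto simp: weak_nbhd_def)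
      thus "{n\<in>Npos. m + n \<in> ?S} \<in> U" by (rule AU_mhat_shift[OF uf assms(3) \<mu> F])
    qed auto
    thus ?thesis by (rule ultrafilter_mono[OF uf]) (use FW in blast)+
  qed
  thus ?thesis using mhat_PrT[OF \<mu> \<nu>] by (simp add: AU_def)
qed

end
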